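(* Let $p$ be a prime and let $A$ be a nontrivial finite $p$-group. Define $A_0=A$ and $A_n=A_{n-1}\wr \mathbb{Z}/p\mathbb{Z}$ for $n\ge1$. Then for every integer $k$, $\lim_{n\to\infty} r_{A_n,k}=1$.
   Context: For a finite $p$-group $G$ with $|G|=p^g$ and maximum element order $p^{f}$, and for $k\in\mathbb{Z}$, define $r_{G,k}=\frac{1}{p^g}\cdot\#\{x\in G:\ \mathrm{order}(x)\le p^{f-k}\}$. For groups $A,B$, let $K=\prod_{b\in B}A$, on which $B$ acts by $x\cdot(\alpha_b)_b=(\alpha_{x^{-1}b})_b$ for $x\in B$; the wreath product $A\wr B$ is the semidirect product $K\rtimes B$ for this action. *)

theory Defs
  imports Complex_Main "HOL-Algebra.Algebra"
begin

text \<open>Universe of elements for the iterated wreath products: a leaf carries an element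
of the base group A; a node (alpha, x) is an element of K \<rtimes> B, where
alpha : B \<rightarrow> A_{n-1} (an element of K = prod_{b in B} A_{n-1}) and x in B.\<close>
datatype 'a wt = Leaf (leaf_val: 'a) | Node (node_fun: "nat \<Rightarrow> 'a wt") (node_top: nat)

definition leaf_group :: "('a, 'm) monoid_scheme \<Rightarrow> 'a wt monoid" where
  "leaf_group A =
     \<lparr> carrier = Leaf ` carrier A,
       monoid.mult = (\<lambda>u v. Leaf (leaf_val u \<otimes>\<^bsub>A\<^esub> leaf_val v)),
       one = Leaf \<one>\<^bsub>A\<^esub> \<rparr>"

text \<open>Wreath product G wr B = K \<rtimes> B with K = prod_{b in B} G, where B acts by
 (x . alpha)_b = alpha_{x^{-1} b}.  Hence
 (alpha, x) (beta, y) = (alpha * (x . beta), x y).\<close>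
definition wreath :: "'a wt monoid \<Rightarrow> nat monoid \<Rightarrow> 'a wt monoid" where
  "wreath G B =
     \<lparr> carrier = {Node alpha x | alpha x. alpha \<in> carrier B \<rightarrow>\<^sub>E carrier G \<and> x \<in> carrier B},
       monoid.mult = (\<lambda>u v. Node
                 (\<lambda>b\<in>carrier B. node_fun u b \<otimes>\<^bsub>G\<^esub>
                     node_fun v (inv\<^bsub>B\<^esub> (node_top u) \<otimes>\<^bsub>B\<^esub> b))
                 (node_top u \<otimes>\<^bsub>B\<^esub> node_top v)),
       one = Node (\<lambda>b\<in>carrier B. \<one>\<^bsub>G\<^esub>) \<one>\<^bsub>B\<^esub> \<rparr>"

definition Zmod :: "nat \<Rightarrow> nat monoid" where
  "Zmod p = \<lparr> carrier = {0..<p}, monoid.mult = (\<lambda>x y. (x + y) mod p), one = 0 \<rparr>"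

primrec iter_wreath :: "nat \<Rightarrow> ('a, 'm) monoid_scheme \<Rightarrow> nat \<Rightarrow> 'a wt monoid" where
  "iter_wreath p A 0 = leaf_group A"
| "iter_wreath p A (Suc n) = wreath (iter_wreath p A n) (Zmod p)"

text \<open>r_{G,k} = |{x : ord x \<le> p^(f-k)}| / p^g, where p^f is the maximal element order
 and p^g = |G|.  We write p^(f-k) = p^f * p^(-k) with p^f = Max of element orders.\<close>
definition r_ratio :: "nat \<Rightarrow> ('a, 'm) monoid_scheme \<Rightarrow> int \<Rightarrow> real" where
  "r_ratio p G k =
     real (card {x \<in> carrier G.
                 real (group.ord G x) \<le> real (Max (group.ord G ` carrier G)) * (real p) powi (- k)})
     / real (card (carrier G))"

end

theory Submission
  imports Defs
begin

text \<open>
  Write \<open>W = G wr C\<^sub>p\<close> for a finite \<open>p\<close>-group \<open>G\<close>. An element \<open>(\<alpha>, 1)\<close> has order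
  \<open>max\<^sub>b ord (\<alpha> b)\<close>. For \<open>x \<noteq> 1\<close> we have \<open>(\<alpha>, x)^p = (\<beta>, 1)\<close>, where the components \<open>\<beta> b\<close>
  are cyclic rotations of a single product \<open>\<alpha>(1) \<alpha>(x^-1) \<dots> \<alpha>(x^(1 - p))\<close>; so they all have
  the same order and \<open>ord (\<alpha>, x) = p * ord (\<beta> 1)\<close>. Moreover \<open>\<beta> 1\<close> is \<open>\<alpha>(1)\<close> times a factor
  not depending on \<open>\<alpha>(1)\<close>, so it is equidistributed over \<open>G\<close> as \<open>\<alpha>\<close> varies. Hence the maximal
  element order of \<open>W\<close> is \<open>p\<close> times that of \<open>G\<close>, and counting elements gives
  \<open>r(W, k) = r(G, k - 1)^p / p + (1 - 1/p) r(G, k)\<close>. As \<open>r(G, k) = 1\<close> for \<open>k \<le> 0\<close>, induction on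
  \<open>k\<close> shows that \<open>1 - r(A\<^sub>n, k)\<close> is contracted by the factor \<open>1 - 1/p\<close> at each step up to an
  error tending to \<open>0\<close>, hence tends to \<open>0\<close>.
\<close>

lemma (in group) pow_mult_swap:
  assumes "a \<in> carrier G" "b \<in> carrier G"
  shows "(b \<otimes> a) [^] (n::nat) \<otimes> b = b \<otimes> (a \<otimes> b) [^] n"
proof (induction n)
  case (Suc n)
  have "(b \<otimes> a) [^] Suc n \<otimes> b = ((b \<otimes> a) [^] n \<otimes> b) \<otimes> (a \<otimes> b)"
    using assms by (simp add: m_assoc)
  also have "\<dots> = b \<otimes> (a \<otimes> b) [^] Suc n"
    using assms by (simp add: Suc m_assoc)
  finally show ?case .
qed (use assms in simp)

lemma (in group) ord_mult_comm:
  assumes "a \<in> carrier G" "b \<in> carrier G"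
  shows "ord (a \<otimes> b) = ord (b \<otimes> a)"
proof -
  have "(b \<otimes> a) [^] n = \<one>" if "(a \<otimes> b) [^] n = \<one>" "a \<in> carrier G" "b \<in> carrier G" for a b and n :: nat
    using pow_mult_swap[OF that(2,3), of n] that by simp
  then show ?thesis
    using assms by (simp add: ord_unique pow_eq_id[symmetric]) (metis m_closed)
qed

lemma card_PiE_filter_at:
  assumes "finite I" "i \<in> I"
  shows "card {f \<in> I \<rightarrow>\<^sub>E S. P (f i)} = card {a \<in> S. P a} * card S ^ (card I - 1)"
proof -
  have "{f \<in> I \<rightarrow>\<^sub>E S. P (f i)} = (\<Pi>\<^sub>E j\<in>I. if j = i then {a \<in> S. P a} else S)"
    using assms(2) by (auto simp: PiE_iff extensional_def split: if_splits)
  then have "card {f \<in> I \<rightarrow>\<^sub>E S. P (f i)} = (\<Prod>j\<in>I. card (if j = i then {a \<in> S. P a} else S))"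
    using assms(1) by (simp add: card_PiE)
  also have "\<dots> = card {a \<in> S. P a} * card S ^ (card I - 1)"
    using assms by (simp add: prod.remove[of I i] card_Diff_singleton)
  finally show ?thesis .
qed

lemma card_filter_inj_endo:
  assumes "finite A" "f ` A \<subseteq> A" "inj_on f A"
  shows "card {x \<in> A. Q (f x)} = card {x \<in> A. Q x}"
proof -
  have "f ` {x \<in> A. Q (f x)} = {x \<in> A. Q x}"
    using endo_inj_surj[OF assms] by auto
  moreover have "inj_on f {x \<in> A. Q (f x)}"
    using assms(3) by (rule inj_on_subset) auto
  ultimately show ?thesis by (metis card_image)
qed

lemma (in group) ord_prime_power:
  assumes "Factorial_Ring.prime p" "card (carrier G) = p ^ g" "a \<in> carrier G"
  shows "\<exists>i. ord a = p ^ i"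
proof -
  have "ord a dvd p ^ g" using ord_dvd_group_order[OF assms(3)] assms(2) by (simp add: order_def)
  then show ?thesis using divides_primepow_nat[OF assms(1)] by blast
qed

lemma (in group) ord_eq_prime_order:
  assumes "Factorial_Ring.prime (card (carrier G))" "x \<in> carrier G" "x \<noteq> \<one>"
  shows "ord x = card (carrier G)"
proof -
  have "ord x dvd card (carrier G)" using ord_dvd_group_order[OF assms(2)] by (simp add: order_def)
  moreover have "ord x \<noteq> 1" using assms(2,3) ord_eq_1 by blast
  ultimately show ?thesis using assms(1) prime_nat_iff by blast
qed

lemma (in group) prime_order_pow_surj:
  assumes "Factorial_Ring.prime (card (carrier G))" "y \<in> carrier G" "y \<noteq> \<one>" "c \<in> carrier G"
  shows "\<exists>j::nat. c = y [^] j"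
proof -
  let ?P = "(\<lambda>j. y [^] j) ` {0..ord y - 1}"
  have "card (carrier G) > 0" using assms(1) by (rule prime_gt_0_nat)
  then have "finite (carrier G)" by (rule card_ge_0_finite)
  moreover have "card ?P = card (carrier G)"
    using card_image[OF ord_inj[OF assms(2)]] ord_eq_prime_order[OF assms(1-3)] \<open>card (carrier G) > 0\<close>
    by simp
  ultimately have "?P = carrier G"
    using assms(2) by (intro card_subset_eq) auto
  then show ?thesis using assms(4) by blast
qed

lemma prime_power_dvd_Max:
  fixes S :: "nat set"
  assumes "finite S" "1 < p" "\<And>s. s \<in> S \<Longrightarrow> \<exists>i. s = p ^ i" "s \<in> S"
  shows "s dvd Max S"
proof -
  have "Max S \<in> S" using assms(1,4) by (intro Max_in) auto
  then obtain j where j: "Max S = p ^ j" using assms(3) by blast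
  obtain i where i: "s = p ^ i" using assms(3,4) by blast
  have "s \<le> Max S" using assms(1,4) by simp
  then have "i \<le> j" unfolding i j by (rule power_le_imp_le_exp[OF assms(2)])
  then show ?thesis unfolding i j by (rule le_imp_power_dvd)
qed

lemma real_Max_le_iff:
  fixes S :: "nat set"
  assumes "finite S" "S \<noteq> {}"
  shows "real (Max S) \<le> t \<longleftrightarrow> (\<forall>s\<in>S. real s \<le> t)"
proof -
  have "real (Max S) = Max (real ` S)"
    using assms by (intro mono_Max_commute) (auto simp: mono_def)
  then show ?thesis using assms by simp
qed

definition ord_count :: "('a, 'm) monoid_scheme \<Rightarrow> real \<Rightarrow> nat" where
  "ord_count G s = card {x \<in> carrier G. real (group.ord G x) \<le> s}"

lemma r_ratio_ord_count:
  "r_ratio p G k =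
    ord_count G (real (Max (group.ord G ` carrier G)) * real p powi (- k)) / card (carrier G)"
  unfolding r_ratio_def ord_count_def ..

locale wreath_product = G: group G + B: group B
  for G :: "'a wt monoid" and B :: "nat monoid"
begin

abbreviation W where "W \<equiv> wreath G B"

lemma Node_in_wreath [simp]:
  "Node \<alpha> x \<in> carrier W \<longleftrightarrow> \<alpha> \<in> carrier B \<rightarrow>\<^sub>E carrier G \<and> x \<in> carrier B"
  by (simp add: wreath_def)

lemma PiE_carrier_apply [simp]:
  "\<alpha> \<in> carrier B \<rightarrow>\<^sub>E carrier G \<Longrightarrow> b \<in> carrier B \<Longrightarrow> \<alpha> b \<in> carrier G"
  by blast

lemma wreath_elem_cases:
  assumes "w \<in> carrier W"
  obtains \<alpha> x where "w = Node \<alpha> x" "\<alpha> \<in> carrier B \<rightarrow>\<^sub>E carrier G" "x \<in> carrier B"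
  using assms by (auto simp: wreath_def)

lemma one_wreath: "\<one>\<^bsub>W\<^esub> = Node (\<lambda>b\<in>carrier B. \<one>\<^bsub>G\<^esub>) \<one>\<^bsub>B\<^esub>"
  by (simp add: wreath_def)

lemma mult_Node:
  "Node \<alpha> x \<otimes>\<^bsub>W\<^esub> Node \<beta> y = Node (\<lambda>b\<in>carrier B. \<alpha> b \<otimes>\<^bsub>G\<^esub> \<beta> (inv\<^bsub>B\<^esub> x \<otimes>\<^bsub>B\<^esub> b)) (x \<otimes>\<^bsub>B\<^esub> y)"
  by (simp add: wreath_def)

lemma group_wreath: "group W"
proof (rule groupI)
  fix u v assume "u \<in> carrier W" "v \<in> carrier W"
  then show "u \<otimes>\<^bsub>W\<^esub> v \<in> carrier W"
    by (elim wreath_elem_cases) (auto simp: mult_Node)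
next
  show "\<one>\<^bsub>W\<^esub> \<in> carrier W" by (simp add: one_wreath)
next
  fix u v w assume "u \<in> carrier W" "v \<in> carrier W" "w \<in> carrier W"
  then show "u \<otimes>\<^bsub>W\<^esub> v \<otimes>\<^bsub>W\<^esub> w = u \<otimes>\<^bsub>W\<^esub> (v \<otimes>\<^bsub>W\<^esub> w)"
    by (elim wreath_elem_cases)
       (auto simp: mult_Node B.m_assoc G.m_assoc B.inv_mult_group intro!: restrict_ext)
next
  fix u assume "u \<in> carrier W"
  then show "\<one>\<^bsub>W\<^esub> \<otimes>\<^bsub>W\<^esub> u = u"
    by (elim wreath_elem_cases) (auto simp: one_wreath mult_Node PiE_iff extensional_def)
next
  fix u assume "u \<in> carrier W"
  then obtain \<alpha> x where u: "u = Node \<alpha> x" "\<alpha> \<in> carrier B \<rightarrow>\<^sub>E carrier G" "x \<in> carrier B"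
    by (rule wreath_elem_cases)
  let ?v = "Node (\<lambda>b\<in>carrier B. inv\<^bsub>G\<^esub> \<alpha> (x \<otimes>\<^bsub>B\<^esub> b)) (inv\<^bsub>B\<^esub> x)"
  have "?v \<otimes>\<^bsub>W\<^esub> u = \<one>\<^bsub>W\<^esub>"
    using u by (auto simp: mult_Node one_wreath intro!: restrict_ext)
  moreover have "?v \<in> carrier W" using u by auto
  ultimately show "\<exists>v\<in>carrier W. v \<otimes>\<^bsub>W\<^esub> u = \<one>\<^bsub>W\<^esub>" by blast
qed

sublocale W: group W by (rule group_wreath)

fun orbit_prod :: "(nat \<Rightarrow> 'a wt) \<Rightarrow> nat \<Rightarrow> nat \<Rightarrow> nat \<Rightarrow> 'a wt" where
  "orbit_prod \<alpha> x 0 b = \<one>\<^bsub>G\<^esub>"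
| "orbit_prod \<alpha> x (Suc n) b = orbit_prod \<alpha> x n b \<otimes>\<^bsub>G\<^esub> \<alpha> (inv\<^bsub>B\<^esub> (x [^]\<^bsub>B\<^esub> n) \<otimes>\<^bsub>B\<^esub> b)"

lemma orbit_prod_closed [simp]:
  "\<alpha> \<in> carrier B \<rightarrow>\<^sub>E carrier G \<Longrightarrow> x \<in> carrier B \<Longrightarrow> b \<in> carrier B \<Longrightarrow>
    orbit_prod \<alpha> x n b \<in> carrier G"
  by (induction n) auto

lemma orbit_prod_cong:
  assumes "\<And>j. j < n \<Longrightarrow> \<alpha> (inv\<^bsub>B\<^esub> (x [^]\<^bsub>B\<^esub> j) \<otimes>\<^bsub>B\<^esub> b) = \<beta> (inv\<^bsub>B\<^esub> (x [^]\<^bsub>B\<^esub> j) \<otimes>\<^bsub>B\<^esub> b)"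
  shows "orbit_prod \<alpha> x n b = orbit_prod \<beta> x n b"
  using assms by (induction n) auto

lemma pow_Node:
  assumes "\<alpha> \<in> carrier B \<rightarrow>\<^sub>E carrier G" "x \<in> carrier B"
  shows "Node \<alpha> x [^]\<^bsub>W\<^esub> n = Node (\<lambda>b\<in>carrier B. orbit_prod \<alpha> x n b) (x [^]\<^bsub>B\<^esub> n)"
  by (induction n) (use assms in \<open>auto simp: one_wreath mult_Node intro!: restrict_ext\<close>)

lemma inv_pow_mult_inv:
  assumes "x \<in> carrier B" "b \<in> carrier B"
  shows "inv\<^bsub>B\<^esub> (x [^]\<^bsub>B\<^esub> n) \<otimes>\<^bsub>B\<^esub> (inv\<^bsub>B\<^esub> x \<otimes>\<^bsub>B\<^esub> b) = inv\<^bsub>B\<^esub> (x [^]\<^bsub>B\<^esub> Suc n) \<otimes>\<^bsub>B\<^esub> b"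
  using assms by (simp add: B.nat_pow_Suc2 B.inv_mult_group B.m_assoc del: nat_pow_Suc B.nat_pow_Suc)

lemma orbit_prod_Suc_left:
  assumes "\<alpha> \<in> carrier B \<rightarrow>\<^sub>E carrier G" "x \<in> carrier B" "b \<in> carrier B"
  shows "orbit_prod \<alpha> x (Suc n) b = \<alpha> b \<otimes>\<^bsub>G\<^esub> orbit_prod \<alpha> x n (inv\<^bsub>B\<^esub> x \<otimes>\<^bsub>B\<^esub> b)"
proof (induction n)
  case (Suc n)
  with assms show ?case by (simp add: G.m_assoc inv_pow_mult_inv del: B.nat_pow_Suc)
qed (use assms in simp)

text \<open>Once \<open>x [^] m = \<one>\<close>, the products starting at \<open>b\<close> and at \<open>inv x \<otimes> b\<close> are
  cyclic rotations \<open>\<alpha> b \<otimes> R\<close> and \<open>R \<otimes> \<alpha> b\<close> of each other.\<close>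
lemma ord_orbit_prod_shift:
  assumes "\<alpha> \<in> carrier B \<rightarrow>\<^sub>E carrier G" "x \<in> carrier B" "b \<in> carrier B" "x [^]\<^bsub>B\<^esub> m = \<one>\<^bsub>B\<^esub>"
  shows "G.ord (orbit_prod \<alpha> x m (inv\<^bsub>B\<^esub> x \<otimes>\<^bsub>B\<^esub> b)) = G.ord (orbit_prod \<alpha> x m b)"
proof (cases m)
  case (Suc n)
  let ?R = "orbit_prod \<alpha> x n (inv\<^bsub>B\<^esub> x \<otimes>\<^bsub>B\<^esub> b)"
  have "orbit_prod \<alpha> x m (inv\<^bsub>B\<^esub> x \<otimes>\<^bsub>B\<^esub> b) = ?R \<otimes>\<^bsub>G\<^esub> \<alpha> b"
    using assms Suc by (simp add: inv_pow_mult_inv del: B.nat_pow_Suc)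
  moreover have "orbit_prod \<alpha> x m b = \<alpha> b \<otimes>\<^bsub>G\<^esub> ?R"
    using assms Suc by (simp only: orbit_prod_Suc_left)
  ultimately show ?thesis
    using assms by (simp add: G.ord_mult_comm)
qed simp

lemma pow_Node_one_eq_one_iff:
  fixes n :: nat
  assumes "\<gamma> \<in> carrier B \<rightarrow>\<^sub>E carrier G"
  shows "Node \<gamma> \<one>\<^bsub>B\<^esub> [^]\<^bsub>W\<^esub> n = \<one>\<^bsub>W\<^esub> \<longleftrightarrow> (\<forall>b\<in>carrier B. \<gamma> b [^]\<^bsub>G\<^esub> n = \<one>\<^bsub>G\<^esub>)"
proof -
  have "orbit_prod \<gamma> \<one>\<^bsub>B\<^esub> n b = \<gamma> b [^]\<^bsub>G\<^esub> n" if "b \<in> carrier B" for b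
    using that by (induction n) auto
  then show ?thesis
    using assms by (auto simp: pow_Node one_wreath fun_eq_iff)
qed

lemma ord_Node_one_dvd_iff:
  assumes "\<gamma> \<in> carrier B \<rightarrow>\<^sub>E carrier G"
  shows "W.ord (Node \<gamma> \<one>\<^bsub>B\<^esub>) dvd n \<longleftrightarrow> (\<forall>b\<in>carrier B. G.ord (\<gamma> b) dvd n)"
  using assms by (simp add: W.pow_eq_id[symmetric] G.pow_eq_id[symmetric] pow_Node_one_eq_one_iff)

lemma ord_Node_one_const:
  assumes "\<gamma> \<in> carrier B \<rightarrow>\<^sub>E carrier G" "\<And>b. b \<in> carrier B \<Longrightarrow> G.ord (\<gamma> b) = d"
  shows "W.ord (Node \<gamma> \<one>\<^bsub>B\<^esub>) = d"
proof -
  have "W.ord (Node \<gamma> \<one>\<^bsub>B\<^esub>) dvd n \<longleftrightarrow> d dvd n" for n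
    using assms B.one_closed by (auto simp: ord_Node_one_dvd_iff)
  then show ?thesis by (meson dvd_antisym dvd_refl)
qed

end

locale finite_wreath_product = wreath_product +
  assumes finite_G: "finite (carrier G)" and finite_B: "finite (carrier B)"
begin

lemma card_wreath_filter:
  "card {w \<in> carrier W. Q w} = (\<Sum>x\<in>carrier B. card {\<alpha> \<in> carrier B \<rightarrow>\<^sub>E carrier G. Q (Node \<alpha> x)})"
proof -
  let ?S = "SIGMA x:carrier B. {\<alpha> \<in> carrier B \<rightarrow>\<^sub>E carrier G. Q (Node \<alpha> x)}"
  have "{w \<in> carrier W. Q w} = (\<lambda>(x, \<alpha>). Node \<alpha> x) ` ?S"
    by (auto simp: wreath_def image_iff)
  moreover have "inj_on (\<lambda>(x, \<alpha>). Node \<alpha> x) ?S"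
    by (auto simp: inj_on_def)
  ultimately show ?thesis
    using finite_B finite_G by (simp add: card_image finite_PiE)
qed

lemma card_wreath: "card (carrier W) = card (carrier G) ^ card (carrier B) * card (carrier B)"
  using card_wreath_filter[of "\<lambda>_. True"] finite_B by (simp add: card_PiE)

lemma finite_wreath: "finite (carrier W)"
proof -
  have "card (carrier G) > 0" "card (carrier B) > 0"
    using finite_G finite_B G.one_closed B.one_closed by (auto simp: card_gt_0_iff)
  then show ?thesis
    using card_wreath by (metis card.infinite nat_0_less_mult_iff zero_less_power less_irrefl)
qed

lemma ord_Node:
  assumes "\<alpha> \<in> carrier B \<rightarrow>\<^sub>E carrier G" "x \<in> carrier B"
  shows "W.ord (Node \<alpha> x) = B.ord x * W.ord (Node \<alpha> x [^]\<^bsub>W\<^esub> B.ord x)"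
proof -
  let ?w = "Node \<alpha> x"
  have "Node (\<lambda>b\<in>carrier B. orbit_prod \<alpha> x (W.ord ?w) b) (x [^]\<^bsub>B\<^esub> W.ord ?w) = \<one>\<^bsub>W\<^esub>"
    by (metis pow_Node Node_in_wreath W.pow_ord_eq_1 assms)
  then have "x [^]\<^bsub>B\<^esub> W.ord ?w = \<one>\<^bsub>B\<^esub>" using assms by (simp add: pow_Node one_wreath)
  then have "B.ord x dvd W.ord ?w" using assms(2) B.pow_eq_id by blast
  moreover have "B.ord x \<noteq> 0" using B.ord_ge_1[OF finite_B assms(2)] by simp
  ultimately show ?thesis using assms by (simp add: W.ord_pow)
qed

definition orbit_tail :: "(nat \<Rightarrow> 'a wt) \<Rightarrow> nat \<Rightarrow> 'a wt" where
  "orbit_tail \<alpha> x = orbit_prod \<alpha> x (B.ord x - 1) (inv\<^bsub>B\<^esub> x)"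

lemma orbit_tail_closed [simp]:
  "\<alpha> \<in> carrier B \<rightarrow>\<^sub>E carrier G \<Longrightarrow> x \<in> carrier B \<Longrightarrow> orbit_tail \<alpha> x \<in> carrier G"
  by (simp add: orbit_tail_def)

lemma orbit_prod_ord_eq:
  assumes "\<alpha> \<in> carrier B \<rightarrow>\<^sub>E carrier G" "x \<in> carrier B"
  shows "orbit_prod \<alpha> x (B.ord x) \<one>\<^bsub>B\<^esub> = \<alpha> \<one>\<^bsub>B\<^esub> \<otimes>\<^bsub>G\<^esub> orbit_tail \<alpha> x"
proof -
  have "B.ord x = Suc (B.ord x - 1)" using B.ord_ge_1[OF finite_B assms(2)] by simp
  then show ?thesis
    using assms orbit_prod_Suc_left[OF assms B.one_closed, of "B.ord x - 1"]
    by (simp add: orbit_tail_def del: orbit_prod.simps)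
qed

text \<open>The tail only reads \<open>\<alpha>\<close> at \<open>inv (x [^] j)\<close> for \<open>0 < j < ord x\<close>, never at \<open>\<one>\<close>.\<close>
lemma orbit_tail_upd_one:
  assumes x: "x \<in> carrier B"
  shows "orbit_tail (\<alpha>(\<one>\<^bsub>B\<^esub> := c)) x = orbit_tail \<alpha> x"
  unfolding orbit_tail_def
proof (rule orbit_prod_cong)
  fix j assume "j < B.ord x - 1"
  then have "\<not> B.ord x dvd Suc j" by (auto dest: dvd_imp_le)
  then have "x [^]\<^bsub>B\<^esub> Suc j \<noteq> \<one>\<^bsub>B\<^esub>"
    using B.pow_eq_id[OF x] by blast
  then have "inv\<^bsub>B\<^esub> (x [^]\<^bsub>B\<^esub> j) \<otimes>\<^bsub>B\<^esub> inv\<^bsub>B\<^esub> x \<noteq> \<one>\<^bsub>B\<^esub>"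
    using x inv_pow_mult_inv[OF x B.one_closed, of j] by simp
  then show "(\<alpha>(\<one>\<^bsub>B\<^esub> := c)) (inv\<^bsub>B\<^esub> (x [^]\<^bsub>B\<^esub> j) \<otimes>\<^bsub>B\<^esub> inv\<^bsub>B\<^esub> x)
    = \<alpha> (inv\<^bsub>B\<^esub> (x [^]\<^bsub>B\<^esub> j) \<otimes>\<^bsub>B\<^esub> inv\<^bsub>B\<^esub> x)"
    by simp
qed

lemma orbit_tail_one: "x \<in> carrier B \<Longrightarrow> orbit_tail (\<lambda>b\<in>carrier B. \<one>\<^bsub>G\<^esub>) x = \<one>\<^bsub>G\<^esub>"
proof -
  assume x: "x \<in> carrier B"
  have "orbit_prod (\<lambda>b\<in>carrier B. \<one>\<^bsub>G\<^esub>) x n b = \<one>\<^bsub>G\<^esub>" if "b \<in> carrier B" for n b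
    using that x by (induction n) auto
  then show ?thesis using x by (simp add: orbit_tail_def)
qed

text \<open>Multiplying the value at \<open>\<one>\<close> by the tail is a bijection of \<open>carrier B \<rightarrow>\<^sub>E carrier G\<close>
  which turns \<open>\<alpha> \<one>\<close> into the full orbit product.\<close>
lemma card_orbit_prod_filter:
  assumes x: "x \<in> carrier B"
  shows "card {\<alpha> \<in> carrier B \<rightarrow>\<^sub>E carrier G. P (orbit_prod \<alpha> x (B.ord x) \<one>\<^bsub>B\<^esub>)}
    = card {a \<in> carrier G. P a} * card (carrier G) ^ (card (carrier B) - 1)"
proof -
  let ?F = "carrier B \<rightarrow>\<^sub>E carrier G"
  define f where "f \<alpha> = \<alpha>(\<one>\<^bsub>B\<^esub> := \<alpha> \<one>\<^bsub>B\<^esub> \<otimes>\<^bsub>G\<^esub> orbit_tail \<alpha> x)" for \<alpha>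
  have f_closed: "f ` ?F \<subseteq> ?F"
    using x by (auto simp: f_def PiE_iff extensional_def)
  have f_inj: "inj_on f ?F"
  proof (rule inj_onI)
    fix \<alpha> \<beta> assume \<alpha>: "\<alpha> \<in> ?F" and \<beta>: "\<beta> \<in> ?F" and eq: "f \<alpha> = f \<beta>"
    have "\<alpha> b = \<beta> b" if "b \<noteq> \<one>\<^bsub>B\<^esub>" for b
      using fun_cong[OF eq, of b] that by (simp add: f_def)
    then have off: "\<alpha>(\<one>\<^bsub>B\<^esub> := c) = \<beta>(\<one>\<^bsub>B\<^esub> := c)" for c
      by auto
    then have "orbit_tail \<alpha> x = orbit_tail \<beta> x"
      by (metis orbit_tail_upd_one[OF x])
    moreover have "\<alpha> \<one>\<^bsub>B\<^esub> \<otimes>\<^bsub>G\<^esub> orbit_tail \<alpha> x = \<beta> \<one>\<^bsub>B\<^esub> \<otimes>\<^bsub>G\<^esub> orbit_tail \<beta> x"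
      using eq unfolding f_def by (metis fun_upd_same)
    ultimately have "\<alpha> \<one>\<^bsub>B\<^esub> = \<beta> \<one>\<^bsub>B\<^esub>"
      using \<alpha> \<beta> x by (simp add: G.r_cancel)
    then show "\<alpha> = \<beta>" using off by (metis fun_upd_triv)
  qed
  have "card {\<alpha> \<in> ?F. P (orbit_prod \<alpha> x (B.ord x) \<one>\<^bsub>B\<^esub>)} = card {\<alpha> \<in> ?F. P (f \<alpha> \<one>\<^bsub>B\<^esub>)}"
    using x by (intro arg_cong[where f = card] Collect_cong) (auto simp: orbit_prod_ord_eq f_def)
  also have "\<dots> = card {\<alpha> \<in> ?F. P (\<alpha> \<one>\<^bsub>B\<^esub>)}"
    using finite_B finite_G f_closed f_inj by (intro card_filter_inj_endo) (auto simp: finite_PiE)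
  also have "\<dots> = card {a \<in> carrier G. P a} * card (carrier G) ^ (card (carrier B) - 1)"
    using finite_B by (simp add: card_PiE_filter_at)
  finally show ?thesis .
qed

end

locale prime_wreath_product = finite_wreath_product +
  fixes p :: nat
  assumes prime_p: "Factorial_Ring.prime p" and card_B: "card (carrier B) = p"
    and G_prime_power: "\<exists>g. card (carrier G) = p ^ g"
begin

lemma p_gt_1: "1 < p"
  using prime_p prime_gt_1_nat by blast

lemma wreath_prime_power: "\<exists>g. card (carrier W) = p ^ g"
proof -
  obtain g where "card (carrier G) = p ^ g" using G_prime_power ..
  then have "card (carrier W) = p ^ (g * p + 1)"
    by (simp add: card_wreath card_B power_mult)
  then show ?thesis ..
qed

lemma ord_G_prime_power: "a \<in> carrier G \<Longrightarrow> \<exists>i. G.ord a = p ^ i"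
  using G_prime_power G.ord_prime_power[OF prime_p] by blast

lemma ord_B: "x \<in> carrier B \<Longrightarrow> x \<noteq> \<one>\<^bsub>B\<^esub> \<Longrightarrow> B.ord x = p"
  using B.ord_eq_prime_order prime_p card_B by simp

lemma ord_Node_one:
  assumes "\<gamma> \<in> carrier B \<rightarrow>\<^sub>E carrier G"
  shows "W.ord (Node \<gamma> \<one>\<^bsub>B\<^esub>) = Max ((\<lambda>b. G.ord (\<gamma> b)) ` carrier B)"
proof -
  let ?S = "(\<lambda>b. G.ord (\<gamma> b)) ` carrier B"
  have "Max ?S \<in> ?S" using finite_B by (intro Max_in) auto
  moreover have "G.ord (\<gamma> b) dvd Max ?S" if "b \<in> carrier B" for b
    using assms that finite_B p_gt_1 ord_G_prime_power by (intro prime_power_dvd_Max) auto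
  ultimately have "W.ord (Node \<gamma> \<one>\<^bsub>B\<^esub>) dvd n \<longleftrightarrow> Max ?S dvd n" for n
    using ord_Node_one_dvd_iff[OF assms] by (auto intro: dvd_trans)
  then show ?thesis by (meson dvd_antisym dvd_refl)
qed

lemma ord_Node_ne_one:
  assumes \<alpha>: "\<alpha> \<in> carrier B \<rightarrow>\<^sub>E carrier G" and x: "x \<in> carrier B" "x \<noteq> \<one>\<^bsub>B\<^esub>"
  shows "W.ord (Node \<alpha> x) = p * G.ord (orbit_prod \<alpha> x p \<one>\<^bsub>B\<^esub>)"
proof -
  let ?P = "orbit_prod \<alpha> x p"
  have xp: "x [^]\<^bsub>B\<^esub> p = \<one>\<^bsub>B\<^esub>"
    using B.pow_ord_eq_1[OF x(1)] unfolding ord_B[OF x] .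
  have shift: "G.ord (?P (inv\<^bsub>B\<^esub> x [^]\<^bsub>B\<^esub> j)) = G.ord (?P \<one>\<^bsub>B\<^esub>)" for j :: nat
  proof (induction j)
    case (Suc j)
    then show ?case
      using ord_orbit_prod_shift[OF \<alpha> x(1) _ xp] x by (simp add: B.nat_pow_Suc2 del: nat_pow_Suc B.nat_pow_Suc)
  qed simp
  have all_eq: "G.ord (?P b) = G.ord (?P \<one>\<^bsub>B\<^esub>)" if b: "b \<in> carrier B" for b
  proof -
    have "inv\<^bsub>B\<^esub> x \<in> carrier B" "inv\<^bsub>B\<^esub> x \<noteq> \<one>\<^bsub>B\<^esub>"
      using x B.inv_eq_1_iff by auto
    then obtain j :: nat where "b = inv\<^bsub>B\<^esub> x [^]\<^bsub>B\<^esub> j"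
      using B.prime_order_pow_surj prime_p card_B b by blast
    then show ?thesis by (simp only: shift)
  qed
  have "W.ord (Node (\<lambda>b\<in>carrier B. ?P b) \<one>\<^bsub>B\<^esub>) = G.ord (?P \<one>\<^bsub>B\<^esub>)"
  proof (rule ord_Node_one_const)
    show "(\<lambda>b\<in>carrier B. ?P b) \<in> carrier B \<rightarrow>\<^sub>E carrier G" using \<alpha> x by simp
    fix b assume "b \<in> carrier B"
    then show "G.ord ((\<lambda>b\<in>carrier B. ?P b) b) = G.ord (?P \<one>\<^bsub>B\<^esub>)"
      using all_eq[of b] by simp
  qed
  moreover have "Node \<alpha> x [^]\<^bsub>W\<^esub> p = Node (\<lambda>b\<in>carrier B. ?P b) \<one>\<^bsub>B\<^esub>"
    using pow_Node[OF \<alpha> x(1)] xp by (simp only:)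
  ultimately show ?thesis
    using ord_Node[OF \<alpha> x(1)] ord_B[OF x] by (simp only:)
qed

lemma Max_ord_wreath: "Max (W.ord ` carrier W) = p * Max (G.ord ` carrier G)"
proof (rule Max_eqI)
  show "finite (W.ord ` carrier W)" using finite_wreath by simp
next
  let ?M = "Max (G.ord ` carrier G)"
  have ord_le: "G.ord a \<le> ?M" if "a \<in> carrier G" for a
    using finite_G that by simp
  fix y assume "y \<in> W.ord ` carrier W"
  then obtain w where "w \<in> carrier W" "y = W.ord w" by blast
  then obtain \<alpha> x where y: "y = W.ord (Node \<alpha> x)" and \<alpha>: "\<alpha> \<in> carrier B \<rightarrow>\<^sub>E carrier G"
    and x: "x \<in> carrier B"
    by (metis wreath_elem_cases)
  show "y \<le> p * ?M"
  proof (cases "x = \<one>\<^bsub>B\<^esub>")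
    case True
    then have "y \<le> ?M"
      using y \<alpha> finite_B B.one_closed ord_le by (simp add: ord_Node_one) (subst Max_le_iff; auto)
    also have "?M \<le> p * ?M" using p_gt_1 by simp
    finally show ?thesis .
  next
    case False
    then show ?thesis
      using y \<alpha> x ord_le by (simp add: ord_Node_ne_one)
  qed
next
  let ?M = "Max (G.ord ` carrier G)"
  have "?M \<in> G.ord ` carrier G" using finite_G by (intro Max_in) auto
  then obtain g where g: "g \<in> carrier G" "G.ord g = ?M" by auto
  have "carrier B \<noteq> {\<one>\<^bsub>B\<^esub>}" using card_B p_gt_1 by auto
  then obtain x where x: "x \<in> carrier B" "x \<noteq> \<one>\<^bsub>B\<^esub>" using B.one_closed by blast
  define \<alpha> where "\<alpha> = (\<lambda>b\<in>carrier B. \<one>\<^bsub>G\<^esub>)(\<one>\<^bsub>B\<^esub> := g)"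
  have \<alpha>_in: "\<alpha> \<in> carrier B \<rightarrow>\<^sub>E carrier G" using g by (auto simp: \<alpha>_def PiE_iff extensional_def)
  have "orbit_prod \<alpha> x p \<one>\<^bsub>B\<^esub> = g"
    using orbit_prod_ord_eq[OF \<alpha>_in x(1)] ord_B[OF x] g x
    by (simp add: \<alpha>_def orbit_tail_upd_one orbit_tail_one)
  then have "W.ord (Node \<alpha> x) = p * ?M" using ord_Node_ne_one[OF \<alpha>_in x] g by simp
  moreover have "Node \<alpha> x \<in> carrier W" using \<alpha>_in x by simp
  ultimately show "p * ?M \<in> W.ord ` carrier W" by (metis rev_image_eqI)
qed

lemma ord_count_wreath:
  "ord_count W s = ord_count G s ^ p + (p - 1) * (ord_count G (s / p) * card (carrier G) ^ (p - 1))"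
proof -
  let ?F = "carrier B \<rightarrow>\<^sub>E carrier G"
  let ?N = "\<lambda>x. card {\<alpha> \<in> ?F. real (W.ord (Node \<alpha> x)) \<le> s}"
  have "ord_count W s = (\<Sum>x\<in>carrier B. ?N x)"
    unfolding ord_count_def by (rule card_wreath_filter)
  also have "\<dots> = ?N \<one>\<^bsub>B\<^esub> + (\<Sum>x\<in>carrier B - {\<one>\<^bsub>B\<^esub>}. ?N x)"
    by (rule sum.remove[OF finite_B B.one_closed])
  also have "?N \<one>\<^bsub>B\<^esub> = ord_count G s ^ p"
  proof -
    have "carrier B \<noteq> {}" using B.one_closed by blast
    then have "real (W.ord (Node \<alpha> \<one>\<^bsub>B\<^esub>)) \<le> s \<longleftrightarrow> (\<forall>b\<in>carrier B. real (G.ord (\<alpha> b)) \<le> s)"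
      if "\<alpha> \<in> ?F" for \<alpha>
      using that finite_B by (simp add: ord_Node_one real_Max_le_iff)
    then have "{\<alpha> \<in> ?F. real (W.ord (Node \<alpha> \<one>\<^bsub>B\<^esub>)) \<le> s}
        = carrier B \<rightarrow>\<^sub>E {a \<in> carrier G. real (G.ord a) \<le> s}"
      by (auto simp: PiE_iff extensional_def)
    then show ?thesis
      using finite_B by (simp add: card_PiE card_B ord_count_def)
  qed
  also have "(\<Sum>x\<in>carrier B - {\<one>\<^bsub>B\<^esub>}. ?N x)
      = (\<Sum>x\<in>carrier B - {\<one>\<^bsub>B\<^esub>}. ord_count G (s / p) * card (carrier G) ^ (p - 1))"
  proof (rule sum.cong[OF refl])
    fix x assume x: "x \<in> carrier B - {\<one>\<^bsub>B\<^esub>}"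
    have "real (p * n) \<le> s \<longleftrightarrow> real n \<le> s / p" for n
      using p_gt_1 by (simp add: pos_le_divide_eq mult.commute)
    then have "{\<alpha> \<in> ?F. real (W.ord (Node \<alpha> x)) \<le> s}
        = {\<alpha> \<in> ?F. real (G.ord (orbit_prod \<alpha> x (B.ord x) \<one>\<^bsub>B\<^esub>)) \<le> s / p}"
      using x by (auto simp: ord_Node_ne_one ord_B)
    then show "?N x = ord_count G (s / p) * card (carrier G) ^ (p - 1)"
      using x card_orbit_prod_filter[of x "\<lambda>a. real (G.ord a) \<le> s / p"]
      by (simp add: card_B ord_count_def)
  qed
  also have "\<dots> = (p - 1) * (ord_count G (s / p) * card (carrier G) ^ (p - 1))"
    using finite_B by (simp add: card_B)
  finally show ?thesis .
qed

lemma r_ratio_wreath: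
  "r_ratio p W k = r_ratio p G (k - 1) ^ p / p + (real p - 1) / p * r_ratio p G k"
proof -
  define t where "t = real (Max (G.ord ` carrier G)) * real p powi (- k)"
  define N where "N = real (card (carrier G))"
  define a where "a = real (ord_count G (p * t))"
  define b where "b = real (ord_count G t)"
  have p: "real p > 0" using p_gt_1 by simp
  have N: "N > 0"
    using finite_G G.one_closed by (auto simp: N_def card_gt_0_iff)
  have Np: "N ^ p = N * N ^ (p - 1)"
    using p_gt_1 by (simp add: power_eq_if)
  have "real p * t = real (Max (G.ord ` carrier G)) * real p powi (- (k - 1))"
    using p by (simp add: t_def power_int_diff power_int_minus field_simps)
  then have r1: "r_ratio p G (k - 1) = a / N"
    by (simp add: r_ratio_ord_count a_def N_def)
  have r2: "r_ratio p G k = b / N"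
    by (simp add: r_ratio_ord_count b_def N_def t_def)
  have "r_ratio p W k = ord_count W (real p * t) / card (carrier W)"
    by (simp add: r_ratio_ord_count Max_ord_wreath t_def mult.assoc)
  also have "\<dots> = (a ^ p + (real p - 1) * (b * N ^ (p - 1))) / (N ^ p * p)"
    using p_gt_1 by (simp add: ord_count_wreath card_wreath card_B a_def b_def N_def of_nat_diff)
  also have "\<dots> = (a / N) ^ p / p + (real p - 1) / p * (b / N)"
    using p N Np by (simp add: field_simps power_divide)
  finally show ?thesis using r1 r2 by simp
qed

end

lemma group_Zmod:
  assumes "0 < p"
  shows "group (Zmod p)"
proof (rule groupI)
  fix x y z assume "x \<in> carrier (Zmod p)" "y \<in> carrier (Zmod p)" "z \<in> carrier (Zmod p)"
  then show "x \<otimes>\<^bsub>Zmod p\<^esub> y \<otimes>\<^bsub>Zmod p\<^esub> z = x \<otimes>\<^bsub>Zmod p\<^esub> (y \<otimes>\<^bsub>Zmod p\<^esub> z)"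
    by (simp add: Zmod_def mod_add_left_eq mod_add_right_eq add.assoc)
next
  fix x assume "x \<in> carrier (Zmod p)"
  then have "(p - x) mod p \<in> carrier (Zmod p)" "(p - x) mod p \<otimes>\<^bsub>Zmod p\<^esub> x = \<one>\<^bsub>Zmod p\<^esub>"
    using assms by (auto simp: Zmod_def mod_add_left_eq)
  then show "\<exists>y\<in>carrier (Zmod p). y \<otimes>\<^bsub>Zmod p\<^esub> x = \<one>\<^bsub>Zmod p\<^esub>" by blast
qed (use assms in \<open>auto simp: Zmod_def\<close>)

lemma card_Zmod: "card (carrier (Zmod p)) = p"
  by (simp add: Zmod_def)

lemma group_leaf_group:
  assumes "group A"
  shows "group (leaf_group A)"
proof -
  interpret A: group A by (rule assms)
  show ?thesis
  proof (rule groupI)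
    fix x assume "x \<in> carrier (leaf_group A)"
    then obtain a where "a \<in> carrier A" "x = Leaf a" by (auto simp: leaf_group_def)
    then have "Leaf (inv\<^bsub>A\<^esub> a) \<in> carrier (leaf_group A)"
      "Leaf (inv\<^bsub>A\<^esub> a) \<otimes>\<^bsub>leaf_group A\<^esub> x = \<one>\<^bsub>leaf_group A\<^esub>"
      by (auto simp: leaf_group_def)
    then show "\<exists>y\<in>carrier (leaf_group A). y \<otimes>\<^bsub>leaf_group A\<^esub> x = \<one>\<^bsub>leaf_group A\<^esub>" by blast
  qed (auto simp: leaf_group_def A.m_assoc)
qed

lemma card_leaf_group: "card (carrier (leaf_group A)) = card (carrier A)"
  by (simp add: leaf_group_def card_image inj_on_def)

lemma prime_wreath_product_Zmod:
  assumes "Factorial_Ring.prime p" "group G" "finite (carrier G)" "card (carrier G) = p ^ g"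
  shows "prime_wreath_product G (Zmod p) p"
  using assms group_Zmod[OF prime_gt_0_nat[OF assms(1)]]
  by (auto simp: prime_wreath_product_def prime_wreath_product_axioms_def finite_wreath_product_def
      finite_wreath_product_axioms_def wreath_product_def card_Zmod Zmod_def)

lemma prime_wreath_product_iter_wreath:
  assumes "Factorial_Ring.prime p" "group A" "finite (carrier A)" "card (carrier A) = p ^ g"
  shows "prime_wreath_product (iter_wreath p A n) (Zmod p) p"
proof (induction n)
  case 0
  show ?case
    using assms group_leaf_group[OF assms(2)] card_leaf_group[of A]
    by (intro prime_wreath_product_Zmod) (auto simp: leaf_group_def)
next
  case (Suc n)
  then interpret prime_wreath_product "iter_wreath p A n" "Zmod p" p .
  obtain g' where "card (carrier W) = p ^ g'" using wreath_prime_power ..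
  then show ?case
    using assms(1) W.group_axioms finite_wreath by (simp add: prime_wreath_product_Zmod)
qed

lemma r_ratio_le_1:
  assumes "finite (carrier G)"
  shows "r_ratio p G k \<le> 1"
proof -
  have "ord_count G t \<le> card (carrier G)" for t
    unfolding ord_count_def using assms by (intro card_mono) auto
  then show ?thesis
    by (auto simp: r_ratio_ord_count divide_le_eq_1)
qed

lemma r_ratio_nonpos:
  assumes "group G" "finite (carrier G)" "0 < p" "k \<le> 0"
  shows "r_ratio p G k = 1"
proof -
  interpret group G by (rule assms(1))
  let ?M = "Max (ord ` carrier G)"
  have "real (ord x) \<le> real ?M * real p powi (- k)" if "x \<in> carrier G" for x
  proof -
    have "real (ord x) \<le> real ?M" using assms(2) that by simp
    also have "\<dots> \<le> real ?M * real p powi (- k)"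
      using assms(3,4) by (simp add: mult_le_cancel_left1 one_le_power_int)
    finally show ?thesis .
  qed
  then have "ord_count G (real ?M * real p powi (- k)) = card (carrier G)"
    unfolding ord_count_def by (metis (mono_tags, lifting) Collect_mem_eq Collect_cong)
  moreover have "card (carrier G) > 0" using assms(2) one_closed by (auto simp: card_gt_0_iff)
  ultimately show ?thesis by (simp add: r_ratio_ord_count)
qed

lemma contraction_tendsto_zero:
  fixes e d :: "nat \<Rightarrow> real" and q :: real
  assumes q: "0 \<le> q" "q < 1" and e: "\<And>n. 0 \<le> e n"
    and step: "\<And>n. e (Suc n) \<le> q * e n + d n" and d: "d \<longlonglongrightarrow> 0"
  shows "e \<longlonglongrightarrow> 0"
proof (rule LIMSEQ_I)
  fix r :: real assume r: "0 < r"
  then have "0 < r / 2 * (1 - q)" using q by simp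
  then obtain N where N: "\<forall>n\<ge>N. norm (d n - 0) < r / 2 * (1 - q)"
    using LIMSEQ_D[OF d] by blast
  have bound: "e (N + m) \<le> q ^ m * e N + r / 2" for m
  proof (induction m)
    case (Suc m)
    have "d (N + m) < r / 2 * (1 - q)" using N[rule_format, of "N + m"] by (simp add: abs_less_iff)
    then have "e (N + Suc m) \<le> q * e (N + m) + r / 2 * (1 - q)"
      using step[of "N + m"] by simp
    also have "\<dots> \<le> q * (q ^ m * e N + r / 2) + r / 2 * (1 - q)"
      using Suc q(1) by (simp add: mult_left_mono)
    also have "\<dots> = q ^ Suc m * e N + r / 2" by (simp add: field_simps)
    finally show ?case .
  qed (use r in simp)
  have "(\<lambda>m. q ^ m * e N) \<longlonglongrightarrow> 0 * e N"
    using q by (intro tendsto_intros) simp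
  moreover have "0 < r / 2" using r by simp
  ultimately obtain M where M: "\<forall>m\<ge>M. norm (q ^ m * e N - 0) < r / 2"
    using LIMSEQ_D by fastforce
  show "\<exists>n0. \<forall>n\<ge>n0. norm (e n - 0) < r"
  proof (intro exI allI impI)
    fix n assume n: "N + M \<le> n"
    then have "e n \<le> q ^ (n - N) * e N + r / 2" using bound[of "n - N"] by simp
    also have "\<dots> < r"
      using M[rule_format, of "n - N"] n by (simp add: abs_less_iff le_diff_conv2)
    finally show "norm (e n - 0) < r" using e[of n] by simp
  qed
qed

lemma wreath_recursion_tendsto_1:
  fixes r :: "nat \<Rightarrow> int \<Rightarrow> real" and p :: nat
  assumes p: "1 < p" and le_1: "\<And>n k. r n k \<le> 1" and nonpos: "\<And>n k. k \<le> 0 \<Longrightarrow> r n k = 1"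
    and step: "\<And>n k. r (Suc n) k = r n (k - 1) ^ p / p + (real p - 1) / p * r n k"
  shows "(\<lambda>n. r n k) \<longlonglongrightarrow> 1"
proof (cases "k \<le> 0")
  case True
  then show ?thesis using nonpos by simp
next
  case False
  have "(\<lambda>n. r n (int j)) \<longlonglongrightarrow> 1" for j
  proof (induction j)
    case 0
    then show ?case using nonpos by simp
  next
    case (Suc j)
    let ?q = "(real p - 1) / p"
    let ?d = "\<lambda>n. (1 - r n (int j) ^ p) / p"
    have q: "0 \<le> ?q" "?q < 1" using p by auto
    have "1 - r (Suc n) (int (Suc j)) = ?q * (1 - r n (int (Suc j))) + ?d n" for n
      using p by (simp add: step field_simps)
    then have contract: "1 - r (Suc n) (int (Suc j)) \<le> ?q * (1 - r n (int (Suc j))) + ?d n" for n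
      by simp
    have "?d \<longlonglongrightarrow> (1 - 1 ^ p) / p"
      using Suc.IH p by (intro tendsto_intros) simp_all
    then have "?d \<longlonglongrightarrow> 0" by simp
    then have "(\<lambda>n. 1 - r n (int (Suc j))) \<longlonglongrightarrow> 0"
      by (intro contraction_tendsto_zero[where e = "\<lambda>n. 1 - r n (int (Suc j))", OF q _ contract])
        (simp_all add: le_1)
    then have "(\<lambda>n. 1 - (1 - r n (int (Suc j)))) \<longlonglongrightarrow> 1 - 0"
      by (intro tendsto_diff tendsto_const)
    then show ?case by simp
  qed
  from this[of "nat k"] show ?thesis using False by simp
qed

theorem lemma3:
  fixes p :: nat and A :: "('a, 'm) monoid_scheme" and k :: int
  assumes "Factorial_Ring.prime p"
    and "group A"
    and "finite (carrier A)"
    and "\<exists>g::nat. card (carrier A) = p ^ g"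
    and "card (carrier A) > 1"
  shows "(\<lambda>n. r_ratio p (iter_wreath p A n) k) \<longlonglongrightarrow> 1"
proof (rule wreath_recursion_tendsto_1)
  obtain g where g: "card (carrier A) = p ^ g" using assms(4) ..
  note A_n = prime_wreath_product_iter_wreath[OF assms(1-3) g]
  show "1 < p" using assms(1) prime_gt_1_nat by blast
  fix n k
  interpret prime_wreath_product "iter_wreath p A n" "Zmod p" p by (rule A_n)
  show "r_ratio p (iter_wreath p A n) k \<le> 1" using finite_G by (rule r_ratio_le_1)
  show "k \<le> 0 \<Longrightarrow> r_ratio p (iter_wreath p A n) k = 1"
    using G.group_axioms finite_G p_gt_1 by (intro r_ratio_nonpos) auto
  show "r_ratio p (iter_wreath p A (Suc n)) k =
      r_ratio p (iter_wreath p A n) (k - 1) ^ p / p + (real p - 1) / p * r_ratio p (iter_wreath p A n) k"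
    using r_ratio_wreath by simp
qed

end
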